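(* Let $m\ge1$, $n\in\mathbb{Z}$, and let $B=(b_0,\ldots,b_{m-1})$ and $T=(t_0,\ldots,t_{m-1})$ be sequences of integers with $\sum_i b_i\ge n$ and $\sum_i t_i=n+m-1$. Then for every $l\in\{1,\ldots,m\}$ there exists $i\in\{0,\ldots,m-1\}$ such that for every $l'\in\{1,\ldots,l\}$, $$\sum_{j=i}^{i+l'-1}b_j\ge 1-l'+\sum_{j=i}^{i+l'-1}t_j.$$
   Context: Indices of $B$ and $T$ are taken modulo $m$ (ring arrangement). *)

theory Defs
  imports Main
begin

end

theory Submission
  imports Defs
begin

text \<open>Put \<open>c j = b j - t j + 1\<close>; the hypotheses say that \<open>c\<close> has total sum at least \<open>1\<close>
  over one period. Extend the prefix sums \<open>P k = c 0 + \<dots> + c (k - 1)\<close> (indices mod \<open>m\<close>)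
  periodically: \<open>P (k + m) = P k + P m\<close> with \<open>P m > 0\<close>. Starting the window at the last
  position \<open>i < m\<close> where \<open>P\<close> attains its minimum over one period, every later
  \<open>P k\<close> with \<open>k \<le> i + m\<close> is strictly larger, i.e. every window sum starting at \<open>i\<close>
  of length at most \<open>m\<close> is positive.\<close>

lemma sum_mod_lessThan_add_period:
  fixes f :: "nat \<Rightarrow> 'a::comm_monoid_add"
  shows "(\<Sum>j<k + m. f (j mod m)) = (\<Sum>j<k. f (j mod m)) + (\<Sum>j<m. f j)"
proof (induction k)
  case 0
  show ?case
    by (auto intro: sum.cong)
next
  case (Suc k)
  have "(\<Sum>j<Suc k + m. f (j mod m)) = (\<Sum>j<k + m. f (j mod m)) + f (k mod m)"
    by simp
  also have "\<dots> = (\<Sum>j<Suc k. f (j mod m)) + (\<Sum>j<m. f j)"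
    by (simp add: Suc.IH add.assoc add.commute add.left_commute)
  finally show ?case .
qed

lemma ex_last_argmin_lessThan:
  fixes f :: "nat \<Rightarrow> 'a::linorder"
  assumes "0 < m"
  shows "\<exists>i<m. (\<forall>k<m. f i \<le> f k) \<and> (\<forall>k. i < k \<longrightarrow> k < m \<longrightarrow> f i < f k)"
proof -
  define I where "I = {i. i < m \<and> (\<forall>k<m. f i \<le> f k)}"
  have "Min (f ` {..<m}) \<in> f ` {..<m}"
    using assms by (intro Min_in) auto
  then obtain i0 where "i0 < m" and "f i0 = Min (f ` {..<m})"
    by auto
  then have "i0 \<in> I"
    by (simp add: I_def)
  moreover have "finite I"
    unfolding I_def by auto
  ultimately have "Max I \<in> I"
    by (intro Max_in) auto
  then have "Max I < m" and min: "\<forall>k<m. f (Max I) \<le> f k"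
    by (auto simp: I_def)
  moreover have "f (Max I) < f k" if "Max I < k" "k < m" for k
  proof (rule ccontr)
    assume "\<not> f (Max I) < f k"
    with min that have "k \<in> I"
      by (auto simp: I_def intro: order_trans)
    with \<open>finite I\<close> have "k \<le> Max I"
      by (rule Max_ge)
    with \<open>Max I < k\<close> show False
      by simp
  qed
  ultimately show ?thesis
    by blast
qed

lemma cycle_lemma:
  fixes c :: "nat \<Rightarrow> 'a::linordered_ab_group_add"
  assumes "0 < m" and "(\<Sum>j<m. c j) > 0"
  shows "\<exists>i<m. \<forall>l\<in>{1..m}. (\<Sum>j=i..<i+l. c (j mod m)) > 0"
proof -
  define P where "P k = (\<Sum>j<k. c (j mod m))" for k
  have window: "P (i + l) = P i + (\<Sum>j=i..<i+l. c (j mod m))" for i l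
    unfolding P_def lessThan_atLeast0 by (rule sum.atLeastLessThan_concat[symmetric]) simp_all
  obtain i where "i < m" and min: "\<And>k. k < m \<Longrightarrow> P i \<le> P k"
    and last: "\<And>k. i < k \<Longrightarrow> k < m \<Longrightarrow> P i < P k"
    using ex_last_argmin_lessThan[OF assms(1), of P] by blast
  have later: "P i < P k" if "i < k" "k \<le> i + m" for k
  proof (cases "k < m")
    case True
    with that show ?thesis
      by (simp add: last)
  next
    case False
    define r where "r = k - m"
    have "k = r + m" and "r < m"
      using False that \<open>i < m\<close> unfolding r_def by linarith+
    then have "P k = P r + (\<Sum>j<m. c j)"
      unfolding P_def by (simp add: sum_mod_lessThan_add_period)
    then have "P r < P k"
      using assms(2) by simp
    with min[OF \<open>r < m\<close>] show ?thesis
      by (rule order.strict_trans1)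
  qed
  have "(\<Sum>j=i..<i+l. c (j mod m)) > 0" if "l \<in> {1..m}" for l
    using later[of "i + l"] that by (simp add: window)
  with \<open>i < m\<close> show ?thesis
    by blast
qed

theorem mainTheorem7:
  fixes m :: nat and n :: int and b t :: "nat \<Rightarrow> int"
  assumes "m \<ge> 1"
    and "(\<Sum>i<m. b i) \<ge> n"
    and "(\<Sum>i<m. t i) = n + int m - 1"
  shows "\<forall>l\<in>{1..m}. \<exists>i<m. \<forall>l'\<in>{1..l}.
           (\<Sum>j=i..i+l'-1. b (j mod m)) \<ge> 1 - int l' + (\<Sum>j=i..i+l'-1. t (j mod m))"
proof -
  define c where "c j = b j - t j + 1" for j
  have "(\<Sum>j<m. c j) > 0"
    using assms(2,3) by (simp add: c_def sum.distrib sum_subtractf)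
  then obtain i where "i < m" and pos: "\<And>l. l \<in> {1..m} \<Longrightarrow> (\<Sum>j=i..<i+l. c (j mod m)) > 0"
    using cycle_lemma[of m c] assms(1) by auto
  have "(\<Sum>j=i..i+l-1. b (j mod m)) \<ge> 1 - int l + (\<Sum>j=i..i+l-1. t (j mod m))"
    if "l \<in> {1..m}" for l
  proof -
    have "{i..i+l-1} = {i..<i+l}"
      using that by auto
    with pos[OF that] show ?thesis
      by (simp add: c_def sum.distrib sum_subtractf)
  qed
  with \<open>i < m\<close> show ?thesis
    by fastforce
qed

end
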